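(* For any $n\geq 1$, $R_n$ listed in both Reflected Gray Code Order $\prec$ and co-Reflected Gray Code Order is a $3$-adjacent Gray code.
   Context: A restricted growth function of length $n$ is an integer sequence $s_1s_2\ldots s_n$ with $s_1=0$ and $0\leq s_{i+1}\leq \max\{s_j\}_{j=1}^i+1$ for $1\leq i\leq n-1$; $R_n$ is the set of these. On $\{0,1,\ldots,m-1\}^n$ ($m\geq2$), let $k$ be the first position where $s_1\ldots s_n$ and $t_1\ldots t_n$ differ. Reflected Gray Code Order $\prec$: $\mathbf s\prec\mathbf t$ if either $\sum_{i=1}^{k-1}s_i$ is even and $s_k<t_k$, or it is odd and $s_k>t_k$. co-Reflected Gray Code Order: $\mathbf s$ is less than $\mathbf t$ if either $U_k$ is even and $s_k<t_k$, or $U_k$ is odd and $s_k>t_k$, where $U_k=|\{i\in\{1,\ldots,k-1\}: s_i\neq0,\ s_i \text{ even}\}|$. A list of same-length sequences is a $d$-adjacent Gray code if successive sequences differ in at most $d$ positions and these positions are adjacent. *)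

theory Defs
  imports Main
begin

text \<open>Sequences are lists of naturals, 0-indexed (paper position i+1 = list index i).\<close>

definition RGF :: "nat \<Rightarrow> nat list set" where
  "RGF n = {s. length s = n \<and> (0 < n \<longrightarrow> s ! 0 = 0) \<and>
     (\<forall>i. Suc i < n \<longrightarrow> s ! Suc i \<le> Max (set (take (Suc i) s)) + 1)}"

definition rgc_less :: "nat list \<Rightarrow> nat list \<Rightarrow> bool" where
  "rgc_less s t \<longleftrightarrow> length s = length t \<and>
     (\<exists>k < length s. take k s = take k t \<and> s ! k \<noteq> t ! k \<and>
        (if even (sum_list (take k s)) then s ! k < t ! k else s ! k > t ! k))"

definition co_rgc_less :: "nat list \<Rightarrow> nat list \<Rightarrow> bool" where
  "co_rgc_less s t \<longleftrightarrow> length s = length t \<and>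
     (\<exists>k < length s. take k s = take k t \<and> s ! k \<noteq> t ! k \<and>
        (if even (card {i. i < k \<and> s ! i \<noteq> 0 \<and> even (s ! i)})
         then s ! k < t ! k else s ! k > t ! k))"

definition diff_positions :: "nat list \<Rightarrow> nat list \<Rightarrow> nat set" where
  "diff_positions s t = {i. i < length s \<and> s ! i \<noteq> t ! i}"

definition adjacent_gray_code :: "nat \<Rightarrow> nat list list \<Rightarrow> bool" where
  "adjacent_gray_code d L \<longleftrightarrow>
     (\<forall>j. Suc j < length L \<longrightarrow>
        (let D = diff_positions (L ! j) (L ! Suc j) in
          card D \<le> d \<and> (\<forall>a b c. a \<in> D \<longrightarrow> c \<in> D \<longrightarrow> a \<le> b \<longrightarrow> b \<le> c \<longrightarrow> b \<in> D)))"

end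

theory Submission
  imports Defs
begin

text \<open>Both orders compare two sequences at their first difference k, increasingly or
decreasingly according to a direction determined by the prefix before k; appending an
entry v reverses the direction exactly when v is odd (Reflected Gray Code Order) or
nonzero and even (co-Reflected). If t immediately follows s, then s must be the largest
RGF extending its first k+1 entries and t the smallest extending theirs. Such an extremal
extension is built greedily, each entry being 0 or one more than the current maximum,
and after at most two greedy entries the direction is the one for which 0 is extremal,
so all later entries vanish. Hence s and t differ only at positions k, k+1, k+2, and
since the second greedy entry is a function of the first, agreement at k+1 forces
agreement at k+2.\<close>

lemma RGF_length: "s \<in> RGF n \<Longrightarrow> length s = n"
  unfolding RGF_def by simp

lemma RGF_nth_le:
  assumes "s \<in> RGF n" "0 < m" "m < n"
  shows "s ! m \<le> Max (set (take m s)) + 1"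
proof -
  obtain i where "m = Suc i" using assms(2) by (cases m) auto
  then show ?thesis using assms unfolding RGF_def by auto
qed

lemma take_RGF: "s \<in> RGF n \<Longrightarrow> m \<le> n \<Longrightarrow> take m s \<in> RGF m"
  unfolding RGF_def by (auto simp: min_def)

lemma RGF_snoc:
  assumes "q \<in> RGF (length q)" "q \<noteq> []" "v \<le> Max (set q) + 1"
  shows "q @ [v] \<in> RGF (Suc (length q))"
  using assms unfolding RGF_def by (auto simp: nth_append less_Suc_eq)

lemma Max_snoc_Max_plus_1: "Max (set (q @ [Max (set q) + 1])) = Max (set q) + 1"
  for q :: "nat list"
  by (cases "q = []") (auto simp: max_def)

lemma take_Suc_eqD:
  assumes "take (Suc k) xs = take (Suc k) ys" "k < length xs" "k < length ys"
  shows "take k xs = take k ys" "xs ! k = ys ! k"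
  using assms by (metis take_take min_absorb1 le_SucI order.refl, metis lessI nth_take)

lemma sorted_wrt_nothing_between:
  assumes "sorted_wrt R xs" and asym: "\<And>x y. R x y \<Longrightarrow> \<not> R y x"
    and "Suc j < length xs" "u \<in> set xs"
  shows "\<not> (R (xs ! j) u \<and> R u (xs ! Suc j))"
proof
  assume between: "R (xs ! j) u \<and> R u (xs ! Suc j)"
  obtain i where i: "i < length xs" "u = xs ! i" using assms(4) by (auto simp: in_set_conv_nth)
  have R_nth: "R (xs ! i') (xs ! j')" if "i' < j'" "j' < length xs" for i' j'
    using assms(1) that by (simp add: sorted_wrt_nth_less)
  consider "i < j" | "i = j" | "i = Suc j" | "Suc j < i" by linarith
  then show False
    using between i R_nth[of i j] R_nth[of "Suc j" i] asym assms(3) by cases auto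
qed

lemma diff_positions_window:
  fixes zs :: "nat list"
  assumes "length p = k" "k < n" "n \<le> k + 3 + length zs" "a \<noteq> b" "x1 = y1 \<Longrightarrow> x2 = y2"
  defines "D \<equiv> diff_positions (take n (p @ a # x1 # x2 # zs)) (take n (p @ b # y1 # y2 # zs))"
  shows "card D \<le> 3 \<and> (\<forall>i j l. i \<in> D \<longrightarrow> l \<in> D \<longrightarrow> i \<le> j \<longrightarrow> j \<le> l \<longrightarrow> j \<in> D)"
proof -
  have D: "i \<in> D \<longleftrightarrow> i < n \<and> (p @ a # x1 # x2 # zs) ! i \<noteq> (p @ b # y1 # y2 # zs) ! i" for i
    using assms(1,3) unfolding D_def diff_positions_def by (auto simp del: take_append)
  have window: "D \<subseteq> {k, Suc k, Suc (Suc k)}"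
  proof
    fix i assume "i \<in> D"
    then show "i \<in> {k, Suc k, Suc (Suc k)}"
      using assms(1) unfolding D by (cases "i < k") (auto simp: nth_append nth_Cons' split: if_splits)
  qed
  have "card D \<le> card {k, Suc k, Suc (Suc k)}" using window by (intro card_mono) auto
  also have "\<dots> = 3" by simp
  finally have "card D \<le> 3" .
  moreover have "j \<in> D" if "i \<in> D" "l \<in> D" "i \<le> j" "j \<le> l" for i j l
  proof -
    have "k \<in> D" using assms unfolding D by (simp add: nth_append)
    moreover have "Suc k \<in> D" if "Suc (Suc k) \<in> D"
      using that assms(1,5) unfolding D by (auto simp: nth_append)
    moreover have "i \<in> {k, Suc k, Suc (Suc k)}" "l \<in> {k, Suc k, Suc (Suc k)}"
      using \<open>i \<in> D\<close> \<open>l \<in> D\<close> window by auto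
    then have "j = k \<or> j = l \<or> j = Suc k \<and> l = Suc (Suc k)"
      using \<open>i \<le> j\<close> \<open>j \<le> l\<close> by auto
    ultimately show ?thesis using \<open>l \<in> D\<close> by auto
  qed
  ultimately show ?thesis by blast
qed

locale gray_order =
  fixes up :: "nat list \<Rightarrow> bool" and keeps :: "nat \<Rightarrow> bool"
  assumes up_snoc: "up (q @ [v]) = (up q = keeps v)"
    and keeps_0: "keeps 0"
    and keeps_Suc_Suc: "keeps (Suc m) \<Longrightarrow> \<not> keeps (Suc (Suc m))"
begin

definition less :: "nat list \<Rightarrow> nat list \<Rightarrow> bool" where
  "less s t \<longleftrightarrow> length s = length t \<and> (\<exists>k < length s. take k s = take k t \<and> s ! k \<noteq> t ! k \<and>
     (if up (take k s) then s ! k < t ! k else s ! k > t ! k))"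

lemma less_asym: "less s t \<Longrightarrow> \<not> less t s"
proof
  assume "less s t" "less t s"
  then obtain k j where
    k: "k < length s" "take k s = take k t" "s ! k \<noteq> t ! k"
       "if up (take k s) then s ! k < t ! k else s ! k > t ! k" and
    j: "j < length t" "take j t = take j s" "t ! j \<noteq> s ! j"
       "if up (take j t) then t ! j < s ! j else t ! j > s ! j"
    unfolding less_def by blast
  have "\<not> k < j" using j(2) k(3) by (metis nth_take)
  moreover have "\<not> j < k" using k(2) j(3) by (metis nth_take)
  ultimately show False using k j by (auto split: if_splits)
qed

definition extreme_digit :: "bool \<Rightarrow> nat list \<Rightarrow> nat" where
  "extreme_digit lowest q = (if up q = lowest then 0 else Max (set q) + 1)"

fun extreme_ext :: "bool \<Rightarrow> nat list \<Rightarrow> nat \<Rightarrow> nat list" where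
  "extreme_ext lowest q 0 = q"
| "extreme_ext lowest q (Suc r) = extreme_ext lowest (q @ [extreme_digit lowest q]) r"

lemma extreme_ext_add: "extreme_ext lowest q (a + b) = extreme_ext lowest (extreme_ext lowest q a) b"
  by (induction a arbitrary: q) auto

lemma extreme_ext_settled: "up q = lowest \<Longrightarrow> extreme_ext lowest q r = q @ replicate r 0"
proof (induction r arbitrary: q)
  case (Suc r)
  then have "up (q @ [0]) = lowest" by (simp add: up_snoc keeps_0)
  then show ?case using Suc by (simp add: extreme_digit_def replicate_append_same[symmetric])
qed simp

lemma second_extreme_digit:
  fixes lowest :: bool and q :: "nat list"
  defines "x \<equiv> extreme_digit lowest q"
  shows "extreme_digit lowest (q @ [x]) = (if x \<noteq> 0 \<and> keeps x then x + 1 else 0)"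
proof (cases "up q = lowest")
  case True
  then show ?thesis by (simp add: x_def extreme_digit_def up_snoc keeps_0)
next
  case False
  then have "x = Max (set q) + 1" by (simp add: x_def extreme_digit_def)
  then show ?thesis
    using False Max_snoc_Max_plus_1[of q] by (auto simp: extreme_digit_def up_snoc)
qed

lemma up_snoc_snoc: "up (q @ [v, w]) = (up (q @ [v]) = keeps w)"
  using up_snoc[of "q @ [v]" w] by simp

lemma up_after_two_extreme_digits:
  fixes lowest :: bool and q :: "nat list"
  defines "x \<equiv> extreme_digit lowest q"
  shows "up (q @ [x, extreme_digit lowest (q @ [x])]) = lowest"
proof (cases "up q = lowest")
  case True
  then show ?thesis by (simp add: x_def extreme_digit_def up_snoc_snoc up_snoc keeps_0)
next
  case False
  then obtain m where "x = Suc m" by (simp add: x_def extreme_digit_def)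
  then show ?thesis
    using False second_extreme_digit[where lowest=lowest and q=q] keeps_Suc_Suc[of m]
    unfolding x_def by (auto simp: extreme_digit_def up_snoc_snoc up_snoc keeps_0 split: if_splits)
qed

lemma extreme_ext_eq:
  fixes lowest :: bool and q :: "nat list"
  defines "x \<equiv> extreme_digit lowest q"
  defines "y \<equiv> extreme_digit lowest (q @ [x])"
  shows "extreme_ext lowest q r = take (length q + r) (q @ x # y # replicate (r - 2) 0)"
proof (cases r)
  case (Suc r')
  show ?thesis
  proof (cases r')
    case (Suc r'')
    have "extreme_ext lowest q r = extreme_ext lowest (q @ [x, y]) r''"
      using extreme_ext_add[of lowest q 2 r''] \<open>r = Suc r'\<close> Suc
      by (simp add: x_def y_def numeral_2_eq_2)
    also have "\<dots> = q @ [x, y] @ replicate r'' 0"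
      using up_after_two_extreme_digits[where lowest=lowest and q=q]
      by (simp add: extreme_ext_settled x_def y_def)
    finally show ?thesis using \<open>r = Suc r'\<close> Suc by simp
  qed (simp_all add: \<open>r = Suc r'\<close> x_def)
qed simp

lemma take_extreme_ext: "take (length q) (extreme_ext lowest q r) = q"
  by (simp add: extreme_ext_eq)

lemma nth_extreme_ext: "extreme_ext lowest q (Suc r) ! length q = extreme_digit lowest q"
  by (simp add: extreme_ext_eq nth_append)

lemma length_extreme_ext: "length (extreme_ext lowest q r) = length q + r"
  by (simp add: extreme_ext_eq)

lemma extreme_ext_RGF:
  "q \<in> RGF (length q) \<Longrightarrow> q \<noteq> [] \<Longrightarrow> extreme_ext lowest q r \<in> RGF (length q + r)"
proof (induction r arbitrary: q)
  case (Suc r)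
  have "q @ [extreme_digit lowest q] \<in> RGF (Suc (length q))"
    using Suc.prems by (intro RGF_snoc) (auto simp: extreme_digit_def)
  then show ?case using Suc.IH[of "q @ [extreme_digit lowest q]"] by simp
qed simp

lemma extreme_ext_extremal:
  assumes "s \<in> RGF (length q + r)" "take (length q) s = q" "q \<noteq> []"
  shows "s = extreme_ext lowest q r \<or>
    (if lowest then less (extreme_ext lowest q r) s else less s (extreme_ext lowest q r))"
  using assms
proof (induction r arbitrary: q)
  case 0
  then show ?case using RGF_length by fastforce
next
  case (Suc r)
  define m where "m = length q"
  define x where "x = extreme_digit lowest q"
  have ls: "length s = Suc (m + r)" using Suc.prems RGF_length m_def by simp
  show ?case
  proof (cases "s ! m = x")
    case True
    then have "take (Suc m) s = q @ [x]"
      using Suc.prems(2) ls m_def by (simp add: take_Suc_conv_app_nth)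
    then show ?thesis
      using Suc.IH[of "q @ [x]"] Suc.prems unfolding extreme_ext.simps x_def[symmetric]
      by (simp add: m_def)
  next
    case False
    define G where "G = extreme_ext lowest q (Suc r)"
    have "s ! m \<le> Max (set q) + 1"
      using RGF_nth_le[OF Suc.prems(1), of m] Suc.prems(2,3) m_def by simp
    then have "if lowest then less G s else less s G"
      using False Suc.prems(2) ls take_extreme_ext[of q lowest "Suc r"] nth_extreme_ext[of lowest q r]
        length_extreme_ext[of lowest q "Suc r"]
      unfolding less_def G_def m_def x_def
      by (auto simp: extreme_digit_def intro!: exI[of _ "length q"])
    then show ?thesis unfolding G_def by auto
  qed
qed

lemma extreme_ext_of_prefix:
  assumes "s \<in> RGF n" "k < n"
  shows "extreme_ext lowest (take (Suc k) s) (n - Suc k) \<in> RGF n"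
    and "length (extreme_ext lowest (take (Suc k) s) (n - Suc k)) = n"
    and "take k (extreme_ext lowest (take (Suc k) s) (n - Suc k)) = take k s"
    and "extreme_ext lowest (take (Suc k) s) (n - Suc k) ! k = s ! k"
proof -
  let ?q = "take (Suc k) s" and ?S = "extreme_ext lowest (take (Suc k) s) (n - Suc k)"
  have lq: "length ?q = Suc k" using assms RGF_length by simp
  have "?q \<in> RGF (length ?q)" using take_RGF[OF assms(1), of "Suc k"] lq assms(2) by simp
  then show "?S \<in> RGF n" using extreme_ext_RGF[of ?q lowest "n - Suc k"] lq assms(2) by fastforce
  show lS: "length ?S = n" using lq assms(2) by (simp add: length_extreme_ext)
  have "take (Suc k) ?S = take (Suc k) s" using take_extreme_ext[of ?q] lq by simp
  from take_Suc_eqD[OF this] show "take k ?S = take k s" "?S ! k = s ! k"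
    using lS assms RGF_length by simp_all
qed

lemma consecutive_are_extreme_exts:
  assumes s: "s \<in> RGF n" and t: "t \<in> RGF n"
    and between: "\<forall>u\<in>RGF n. \<not> (less s u \<and> less u t)"
    and k: "k < n" "take k s = take k t" "s ! k \<noteq> t ! k"
      "if up (take k s) then s ! k < t ! k else s ! k > t ! k"
  shows "s = extreme_ext False (take (Suc k) s) (n - Suc k)"
    and "t = extreme_ext True (take (Suc k) t) (n - Suc k)"
proof -
  have ls: "length s = n" and lt: "length t = n" using s t RGF_length by auto
  have lq: "length (take (Suc k) s) + (n - Suc k) = n" "length (take (Suc k) t) + (n - Suc k) = n"
    using ls lt k(1) by auto
  have ne: "take (Suc k) s \<noteq> []" "take (Suc k) t \<noteq> []" using ls lt k(1) by auto
  define S where "S = extreme_ext False (take (Suc k) s) (n - Suc k)"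
  define T where "T = extreme_ext True (take (Suc k) t) (n - Suc k)"
  note S = extreme_ext_of_prefix[OF s k(1), of False, folded S_def]
  note T = extreme_ext_of_prefix[OF t k(1), of True, folded T_def]
  show "s = S"
  proof (rule ccontr)
    assume "s \<noteq> S"
    then have "less s S"
      using extreme_ext_extremal[of s "take (Suc k) s" "n - Suc k" False] s lq ls ne k(1)
      by (simp add: S_def)
    moreover have "less S t"
      unfolding less_def using S k lt by (intro conjI exI[of _ k]) auto
    ultimately show False using between S(1) by blast
  qed
  show "t = T"
  proof (rule ccontr)
    assume "t \<noteq> T"
    then have "less T t"
      using extreme_ext_extremal[of t "take (Suc k) t" "n - Suc k" True] t lq lt ne k(1)
      by (simp add: T_def)
    moreover have "less s T"
      unfolding less_def using T k ls by (intro conjI exI[of _ k]) auto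
    ultimately show False using between T(1) by blast
  qed
qed

lemma consecutive_diff_positions:
  assumes s: "s \<in> RGF n" and t: "t \<in> RGF n" and "less s t"
    and between: "\<forall>u\<in>RGF n. \<not> (less s u \<and> less u t)"
  defines "D \<equiv> diff_positions s t"
  shows "card D \<le> 3 \<and> (\<forall>i j l. i \<in> D \<longrightarrow> l \<in> D \<longrightarrow> i \<le> j \<longrightarrow> j \<le> l \<longrightarrow> j \<in> D)"
proof -
  obtain k where k: "k < length s" "take k s = take k t" "s ! k \<noteq> t ! k"
    "if up (take k s) then s ! k < t ! k else s ! k > t ! k"
    using \<open>less s t\<close> unfolding less_def by blast
  have ls: "length s = n" and lt: "length t = n" using s t RGF_length by auto
  define p where "p = take k s"
  define a where "a = s ! k"
  define b where "b = t ! k"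
  define m where "m = n - Suc k"
  define x1 where "x1 = extreme_digit False (p @ [a])"
  define x2 where "x2 = extreme_digit False (p @ [a, x1])"
  define y1 where "y1 = extreme_digit True (p @ [b])"
  define y2 where "y2 = extreme_digit True (p @ [b, y1])"
  have "take (Suc k) s = p @ [a]" "take (Suc k) t = p @ [b]"
    using k(1,2) ls lt by (simp_all add: p_def a_def b_def take_Suc_conv_app_nth)
  moreover note consecutive_are_extreme_exts[OF s t between, of k] k ls
  ultimately have "s = extreme_ext False (p @ [a]) m" "t = extreme_ext True (p @ [b]) m"
    by (simp_all add: m_def)
  then have s_eq: "s = take n (p @ a # x1 # x2 # replicate (m - 2) 0)"
    and t_eq: "t = take n (p @ b # y1 # y2 # replicate (m - 2) 0)"
    using k(1) ls by (simp_all add: extreme_ext_eq x1_def x2_def y1_def y2_def p_def m_def)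
  have "x1 = y1 \<Longrightarrow> x2 = y2"
    using second_extreme_digit[where lowest=False and q="p @ [a]"]
      second_extreme_digit[where lowest=True and q="p @ [b]"]
    by (simp add: x1_def x2_def y1_def y2_def)
  then show ?thesis unfolding D_def s_eq t_eq
    by (rule diff_positions_window[rotated 4])
      (use k ls lt in \<open>auto simp: p_def a_def b_def m_def\<close>)
qed

theorem sorted_adjacent_gray_code:
  assumes "set L = RGF n" "sorted_wrt less L"
  shows "adjacent_gray_code 3 L"
  unfolding adjacent_gray_code_def Let_def
proof (intro allI impI)
  fix j assume j: "Suc j < length L"
  have "L ! j \<in> RGF n" "L ! Suc j \<in> RGF n" using j assms(1) nth_mem by force+
  moreover have "less (L ! j) (L ! Suc j)" using assms(2) j by (simp add: sorted_wrt_nth_less)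
  moreover have "\<forall>u\<in>RGF n. \<not> (less (L ! j) u \<and> less u (L ! Suc j))"
    using sorted_wrt_nothing_between[OF assms(2) less_asym j] assms(1) by blast
  ultimately show "card (diff_positions (L ! j) (L ! Suc j)) \<le> 3 \<and>
    (\<forall>a b c. a \<in> diff_positions (L ! j) (L ! Suc j) \<longrightarrow> c \<in> diff_positions (L ! j) (L ! Suc j) \<longrightarrow>
       a \<le> b \<longrightarrow> b \<le> c \<longrightarrow> b \<in> diff_positions (L ! j) (L ! Suc j))"
    by (rule consecutive_diff_positions)
qed

end

interpretation rgc: gray_order "\<lambda>q. even (sum_list q)" even
  by unfold_locales auto

interpretation co_rgc:
  gray_order "\<lambda>q. even (length (filter (\<lambda>v. v \<noteq> 0 \<and> even v) q))" "\<lambda>v. v = 0 \<or> odd v"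
  by unfold_locales auto

lemma rgc_less_eq: "rgc_less = rgc.less"
  by (intro ext) (simp add: rgc_less_def rgc.less_def)

lemma co_rgc_less_eq: "co_rgc_less = co_rgc.less"
proof (intro ext)
  fix s t :: "nat list"
  have "length (filter (\<lambda>v. v \<noteq> 0 \<and> even v) (take k s)) =
      card {i. i < k \<and> s ! i \<noteq> 0 \<and> even (s ! i)}" if "k < length s" for k
    using that by (simp add: length_filter_conv_card cong: conj_cong)
  then show "co_rgc_less s t = co_rgc.less s t"
    unfolding co_rgc_less_def co_rgc.less_def by (metis (no_types, lifting))
qed

theorem corollary1:
  fixes n :: nat
  assumes "n \<ge> 1"
  shows "(\<forall>L. set L = RGF n \<and> sorted_wrt rgc_less L \<longrightarrow> adjacent_gray_code 3 L) \<and>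
         (\<forall>L. set L = RGF n \<and> sorted_wrt co_rgc_less L \<longrightarrow> adjacent_gray_code 3 L)"
  unfolding rgc_less_eq co_rgc_less_eq
  using rgc.sorted_adjacent_gray_code co_rgc.sorted_adjacent_gray_code by blast

end
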